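(* Let $0\le v\le\tfrac12$. Then, as $n_{\mathcal S}+n_0\to\infty$ and $\lambda_1\to0$, $$\left\|(L_{T^{(0)}})^{v}\Big(\sum_{l\in\mathcal S^*}\alpha_lL_{T^{(l)}}+\lambda_1I\Big)^{-1}\sum_{l\in\mathcal S^*}g_{ln}\right\|_{L^2}^2=O_P\!\left(\big((n_{\mathcal S}+n_0)\lambda_1^{1-2v+\frac1{2r}}\big)^{-1}\right),$$ where $g_{ln}=\frac1{n_{\mathcal S}+n_0}\sum_{i=1}^{n_l}\epsilon_i^{(l)}L_{K^{1/2}}X_i^{(l)}$.
   Context: Setting: tasks $l\in\mathcal S^*=\{0\}\cup\mathcal S$ (finite), data $Y_i^{(l)}=\langle X_i^{(l)},\beta^{(l)}\rangle+\epsilon_i^{(l)}$, $i=1,\dots,n_l$, independent across $i$ and $l$; $X_i^{(l)}$ mean-zero in $L^2(\mathcal T)$ with covariance kernel $C^{(l)}$; $\epsilon_i^{(l)}$ independent of covariates with mean zero and variance $\sigma_l^2<\infty$. $K$ is a reproducing kernel, $L_\Gamma f=\int\Gamma(\cdot,t)f(t)dt$, $L_{T^{(l)}}=L_{K^{1/2}}L_{C^{(l)}}L_{K^{1/2}}$, $n_{\mathcal S}=\sum_{l\in\mathcal S}n_l$, $\alpha_l=n_l/(n_{\mathcal S}+n_0)$. Assume the $L_{T^{(l)}}$ share a common eigenbasis $\{\phi_j\}$ with eigenvalues $s_j^{(l)}$, $s_j^{(0)}\asymp j^{-2r}$ with $r>1/2$, and $c\,s_j^{(0)}\le\sum_{l\in\mathcal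 S^*}\alpha_ls_j^{(l)}$, $s_j^{(l)}\le Cs_j^{(0)}$ for constants $c,C>0$ independent of $j,n$. *)

theory Defs
  imports "HOL-Probability.Probability"
begin

text \<open>Functional calculus for a self-adjoint operator that is diagonal in the orthonormal
basis phi with eigenvalues s: its v-th power acts as
x maps to sum over j of (s j powr v) times (x inner phi j) times phi j.\<close>
definition op_powr_eig :: "(nat \<Rightarrow> 'a::real_inner) \<Rightarrow> (nat \<Rightarrow> real) \<Rightarrow> real \<Rightarrow> 'a \<Rightarrow> 'a" where
  "op_powr_eig \<phi> s v x = (\<Sum>j. (s j powr v * (x \<bullet> \<phi> j)) *\<^sub>R \<phi> j)"

end

theory Submission
  imports Defs
begin

text \<open>In the common eigenbasis \<open>\<phi>\<close> the regularized operator is diagonal, so with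
  \<open>g = \<Sum>l. g_ln\<close> and \<open>S_j = \<Sum>l. \<alpha>_l s_l,j\<close> the squared norm is
  \<open>\<Sum>j. s0_j^(2\<nu>) \<langle>g, \<phi>_j\<rangle>\<^sup>2 / (S_j + \<lambda>)\<^sup>2\<close>. Each \<open>\<langle>g, \<phi>_j\<rangle>\<close> is \<open>1/N\<close> times a sum of
  independent centred terms \<open>\<epsilon> \<langle>X, K^(1/2) \<phi>_j\<rangle>\<close> of variance \<open>\<sigma>_l\<^sup>2 s_l,j\<close>, so the expected
  squared norm is at most \<open>\<sigma>\<^sup>2/N \<Sum>j. s0_j^(2\<nu>) S_j / (S_j + \<lambda>)\<^sup>2\<close>. Since \<open>S_j\<close> and \<open>s0_j\<close>
  are both of order \<open>j^(-2r)\<close>, splitting this sum where \<open>s0_j\<close> crosses \<open>\<lambda>\<close>, i.e. at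
  \<open>j \<approx> \<lambda>^(-1/(2r))\<close>, bounds it by a constant times \<open>\<lambda>^(-(1 - 2\<nu> + 1/(2r)))\<close>.
  Markov's inequality turns the bound on the expectation into the stochastic order bound.\<close>

section \<open>Orthonormal systems\<close>

lemma inner_sum_orthonormal:
  fixes \<phi> :: "nat \<Rightarrow> 'a::real_inner"
  assumes orth: "\<forall>j k. \<phi> j \<bullet> \<phi> k = (if j = k then 1 else 0)" and "finite F"
  shows "(\<Sum>j\<in>F. b j *\<^sub>R \<phi> j) \<bullet> \<phi> k = (if k \<in> F then b k else 0)"
proof -
  have "(\<Sum>j\<in>F. b j *\<^sub>R \<phi> j) \<bullet> \<phi> k = (\<Sum>j\<in>F. b j * (if j = k then 1 else 0))"
    by (simp add: inner_sum_left orth)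
  then show ?thesis
    using \<open>finite F\<close> by (simp add: if_distrib sum.delta' cong: if_cong)
qed

lemma norm_sum_orthonormal_sq:
  fixes \<phi> :: "nat \<Rightarrow> 'a::real_inner"
  assumes orth: "\<forall>j k. \<phi> j \<bullet> \<phi> k = (if j = k then 1 else 0)" and F: "finite F"
  shows "(norm (\<Sum>j\<in>F. b j *\<^sub>R \<phi> j))\<^sup>2 = (\<Sum>j\<in>F. (b j)\<^sup>2)"
proof -
  have "(norm (\<Sum>j\<in>F. b j *\<^sub>R \<phi> j))\<^sup>2 = (\<Sum>j\<in>F. b j * (\<phi> j \<bullet> (\<Sum>k\<in>F. b k *\<^sub>R \<phi> k)))"
    by (simp add: power2_norm_eq_inner inner_sum_left)
  also have "\<dots> = (\<Sum>j\<in>F. (b j)\<^sup>2)"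
    using inner_sum_orthonormal[OF orth F, of b]
    by (intro sum.cong) (auto simp: inner_commute power2_eq_square)
  finally show ?thesis .
qed

lemma bessel_inequality:
  fixes \<phi> :: "nat \<Rightarrow> 'a::real_inner"
  assumes orth: "\<forall>j k. \<phi> j \<bullet> \<phi> k = (if j = k then 1 else 0)"
  shows "(\<Sum>j<n. (y \<bullet> \<phi> j)\<^sup>2) \<le> (norm y)\<^sup>2"
proof -
  define P where "P = (\<Sum>j<n. (y \<bullet> \<phi> j) *\<^sub>R \<phi> j)"
  have norm_P: "(norm P)\<^sup>2 = (\<Sum>j<n. (y \<bullet> \<phi> j)\<^sup>2)"
    unfolding P_def by (rule norm_sum_orthonormal_sq[OF orth]) simp
  have inner_P: "y \<bullet> P = (\<Sum>j<n. (y \<bullet> \<phi> j)\<^sup>2)"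
    unfolding P_def by (simp add: inner_sum_right power2_eq_square)
  have "0 \<le> (norm (y - P))\<^sup>2" by simp
  also have "\<dots> = (norm y)\<^sup>2 - 2 * (y \<bullet> P) + (norm P)\<^sup>2"
    by (simp add: power2_norm_eq_inner inner_diff_left inner_diff_right inner_commute)
  finally show ?thesis using norm_P inner_P by simp
qed

lemma summable_bessel:
  fixes \<phi> :: "nat \<Rightarrow> 'a::real_inner"
  assumes "\<forall>j k. \<phi> j \<bullet> \<phi> k = (if j = k then 1 else 0)"
  shows "summable (\<lambda>j. (y \<bullet> \<phi> j)\<^sup>2)"
  by (rule summableI_nonneg_bounded[where x="(norm y)\<^sup>2"]) (auto intro: bessel_inequality[OF assms])

lemma orthogonal_to_complete_system_eq_0:
  fixes \<phi> :: "nat \<Rightarrow> 'a::real_inner"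
  assumes complete: "closure (span (range \<phi>)) = UNIV" and orth: "\<And>k. z \<bullet> \<phi> k = 0"
  shows "z = 0"
proof -
  have "span (range \<phi>) \<subseteq> {w. z \<bullet> w = 0}"
    using orth by (intro span_minimal) (auto simp: subspace_def inner_add_right)
  moreover have "closed {w. z \<bullet> w = 0}"
    by (intro closed_Collect_eq continuous_intros)
  ultimately have "closure (span (range \<phi>)) \<subseteq> {w. z \<bullet> w = 0}"
    by (rule closure_minimal)
  then have "z \<in> {w. z \<bullet> w = 0}" using complete by blast
  then show ?thesis by simp
qed

lemma
  fixes \<phi> :: "nat \<Rightarrow> 'a::{real_inner,complete_space}"
  assumes orth: "\<forall>j k. \<phi> j \<bullet> \<phi> k = (if j = k then 1 else 0)"
    and sq_summable: "summable (\<lambda>j. (b j)\<^sup>2)"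
  shows summable_orthonormal_series: "summable (\<lambda>j. b j *\<^sub>R \<phi> j)"
    and inner_orthonormal_series: "(\<Sum>j. b j *\<^sub>R \<phi> j) \<bullet> \<phi> k = b k"
    and norm_orthonormal_series_sq: "(norm (\<Sum>j. b j *\<^sub>R \<phi> j))\<^sup>2 = (\<Sum>j. (b j)\<^sup>2)"
proof -
  define S where "S n = (\<Sum>j<n. b j *\<^sub>R \<phi> j)" for n
  have "Cauchy S"
  proof (rule metric_CauchyI)
    fix e :: real assume "e > 0"
    then obtain N where N: "\<And>m n. m \<ge> N \<Longrightarrow> norm (\<Sum>j\<in>{m..<n}. (b j)\<^sup>2) < e\<^sup>2"
      using sq_summable[unfolded summable_Cauchy] by (meson zero_less_power)
    have close: "dist (S m) (S n) < e" if "N \<le> m" "m \<le> n" for m n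
    proof -
      have "S n - S m = (\<Sum>j\<in>{m..<n}. b j *\<^sub>R \<phi> j)"
        unfolding S_def using \<open>m \<le> n\<close> by (metis sum_diff_nat_ivl atLeast0LessThan le0)
      then have "(dist (S m) (S n))\<^sup>2 = (\<Sum>j\<in>{m..<n}. (b j)\<^sup>2)"
        using norm_sum_orthonormal_sq[OF orth, of "{m..<n}" b]
        by (metis dist_commute dist_norm finite_atLeastLessThan)
      then have "(dist (S m) (S n))\<^sup>2 < e\<^sup>2"
        using N[OF \<open>N \<le> m\<close>, of n] by simp
      then show ?thesis using \<open>e > 0\<close> by (simp add: power_less_imp_less_base)
    qed
    show "\<exists>N. \<forall>m\<ge>N. \<forall>n\<ge>N. dist (S m) (S n) < e"
      using close by (metis dist_commute nle_le)
  qed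
  then show summable: "summable (\<lambda>j. b j *\<^sub>R \<phi> j)"
    unfolding summable_iff_convergent S_def[symmetric] by (rule Cauchy_convergent)
  have inner_series: "(\<Sum>j. b j *\<^sub>R \<phi> j) \<bullet> v = (\<Sum>j. b j * (\<phi> j \<bullet> v))" for v
    using bounded_linear.suminf[OF bounded_linear_inner_left summable, of v] by simp
  show coeff: "(\<Sum>j. b j *\<^sub>R \<phi> j) \<bullet> \<phi> k = b k" for k
  proof -
    have "(\<lambda>j. b j * (\<phi> j \<bullet> \<phi> k)) = (\<lambda>j. if j = k then b j else 0)"
      using orth by auto
    then show ?thesis using inner_series sums_single[of k b] by (simp add: sums_iff)
  qed
  have "(\<Sum>j. b j * (\<phi> j \<bullet> (\<Sum>j. b j *\<^sub>R \<phi> j))) = (\<Sum>j. (b j)\<^sup>2)"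
    using coeff by (simp add: inner_commute power2_eq_square)
  then show "(norm (\<Sum>j. b j *\<^sub>R \<phi> j))\<^sup>2 = (\<Sum>j. (b j)\<^sup>2)"
    using inner_series by (simp add: power2_norm_eq_inner)
qed

lemma inner_inv_diagonal:
  fixes \<phi> :: "nat \<Rightarrow> 'a::{real_inner,complete_space}" and A :: "'a \<Rightarrow> 'a"
  assumes orth: "\<forall>j k. \<phi> j \<bullet> \<phi> k = (if j = k then 1 else 0)"
    and complete: "closure (span (range \<phi>)) = UNIV"
    and diagonal: "\<And>x k. A x \<bullet> \<phi> k = \<mu> k * (x \<bullet> \<phi> k)"
    and coercive: "\<And>k. \<mu> k \<ge> lam" and "lam > 0"
  shows "inv A y \<bullet> \<phi> k = (y \<bullet> \<phi> k) / \<mu> k"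
proof -
  have \<mu>_nonzero: "\<mu> k \<noteq> 0" for k using coercive[of k] \<open>lam > 0\<close> by linarith
  have "inj A"
  proof (rule injI)
    fix z z' assume "A z = A z'"
    then have "(z - z') \<bullet> \<phi> k = 0" for k
      using diagonal[of z k] diagonal[of z' k] \<mu>_nonzero[of k] by (simp add: inner_diff_left)
    then have "z - z' = 0" by (rule orthogonal_to_complete_system_eq_0[OF complete])
    then show "z = z'" by simp
  qed
  define b where "b j = (y \<bullet> \<phi> j) / \<mu> j" for j
  have "(b j)\<^sup>2 \<le> (y \<bullet> \<phi> j)\<^sup>2 / lam\<^sup>2" for j
  proof -
    have "\<bar>b j\<bar> \<le> \<bar>y \<bullet> \<phi> j\<bar> / lam"
      unfolding b_def using coercive[of j] \<open>lam > 0\<close>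
      by (simp add: abs_divide) (intro divide_left_mono, auto)
    then show ?thesis by (metis abs_ge_zero power_divide power2_abs power_mono)
  qed
  then have "summable (\<lambda>j. (b j)\<^sup>2)"
    by (intro summable_comparison_test[OF _ summable_divide[OF summable_bessel[OF orth]]]) auto
  then have coeff: "(\<Sum>j. b j *\<^sub>R \<phi> j) \<bullet> \<phi> k = b k" for k
    by (rule inner_orthonormal_series[OF orth])
  have "A (\<Sum>j. b j *\<^sub>R \<phi> j) - y = 0"
    using \<mu>_nonzero
    by (intro orthogonal_to_complete_system_eq_0[OF complete])
      (simp add: inner_diff_left diagonal coeff, simp add: b_def)
  then have "inv A y = (\<Sum>j. b j *\<^sub>R \<phi> j)" using inv_f_f[OF \<open>inj A\<close>] by force
  then show ?thesis using coeff[of k] by (simp add: b_def)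
qed

lemma
  fixes \<phi> :: "nat \<Rightarrow> 'a::{real_inner,complete_space}"
  assumes orth: "\<forall>j k. \<phi> j \<bullet> \<phi> k = (if j = k then 1 else 0)"
    and s_nonneg: "\<And>j. 0 \<le> s j" and s_bounded: "\<And>j. s j \<le> K" and "\<nu> \<ge> 0"
  shows summable_op_powr_eig_coeffs: "summable (\<lambda>j. (s j powr \<nu> * (x \<bullet> \<phi> j))\<^sup>2)"
    and norm_op_powr_eig_sq:
      "(norm (op_powr_eig \<phi> s \<nu> x))\<^sup>2 = (\<Sum>j. (s j powr \<nu> * (x \<bullet> \<phi> j))\<^sup>2)"
proof -
  have "(s j powr \<nu> * (x \<bullet> \<phi> j))\<^sup>2 \<le> (K powr \<nu>)\<^sup>2 * (x \<bullet> \<phi> j)\<^sup>2" for j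
  proof -
    have "s j powr \<nu> \<le> K powr \<nu>" using s_nonneg s_bounded \<open>\<nu> \<ge> 0\<close> by (intro powr_mono2) auto
    then have "(s j powr \<nu>)\<^sup>2 \<le> (K powr \<nu>)\<^sup>2" by (intro power_mono) auto
    then show ?thesis unfolding power_mult_distrib by (intro mult_right_mono) auto
  qed
  then show summable: "summable (\<lambda>j. (s j powr \<nu> * (x \<bullet> \<phi> j))\<^sup>2)"
    by (intro summable_comparison_test[OF _ summable_mult[OF summable_bessel[OF orth]]]) auto
  show "(norm (op_powr_eig \<phi> s \<nu> x))\<^sup>2 = (\<Sum>j. (s j powr \<nu> * (x \<bullet> \<phi> j))\<^sup>2)"
    unfolding op_powr_eig_def by (rule norm_orthonormal_series_sq[OF orth summable])
qed

section \<open>Sums of power sequences\<close>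

lemma powr_minus_le_diff_powr:
  fixes q x :: real
  assumes q: "q > 1" and x: "x > 1"
  shows "x powr (-q) \<le> ((x - 1) powr (1 - q) - x powr (1 - q)) / (q - 1)"
proof -
  define h where "h = 1 / x"
  have h: "0 < h" "h < 1" using x by (auto simp: h_def)
  have "(q - 1) * (h + ln (1 - h)) \<le> 0"
    using ln_le_minus_one[of "1 - h"] h q by (intro mult_nonneg_nonpos) auto
  then have "1 + (q - 1) * h \<le> 1 - (q - 1) * ln (1 - h)"
    by (simp add: algebra_simps)
  also have "\<dots> \<le> exp ((1 - q) * ln (1 - h))"
    using exp_ge_add_one_self[of "(1 - q) * ln (1 - h)"] by (simp add: algebra_simps)
  also have "\<dots> = (1 - h) powr (1 - q)" using h by (simp add: powr_def algebra_simps)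
  finally have bernoulli: "1 + (q - 1) * h \<le> (1 - h) powr (1 - q)" .
  have "x - 1 = x * (1 - h)" using x by (simp add: h_def field_simps)
  then have "(x - 1) powr (1 - q) = x powr (1 - q) * (1 - h) powr (1 - q)"
    using x h by (simp add: powr_mult)
  moreover have "x powr (1 - q) * (1 + (q - 1) * h) = x powr (1 - q) + (q - 1) * x powr (-q)"
    using x by (simp add: h_def algebra_simps powr_diff powr_minus divide_simps)
  moreover have "x powr (1 - q) * (1 + (q - 1) * h) \<le> x powr (1 - q) * (1 - h) powr (1 - q)"
    using bernoulli by (intro mult_left_mono) auto
  ultimately show ?thesis using q by (simp add: field_simps)
qed

lemma
  fixes q :: real
  assumes q: "q > 1" and m: "m \<ge> (1::nat)"
  shows summable_powr_tail: "summable (\<lambda>k. real (k + m + 1) powr (-q))"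
    and suminf_powr_tail_le: "(\<Sum>k. real (k + m + 1) powr (-q)) \<le> real m powr (1 - q) / (q - 1)"
proof -
  have telescope: "(\<Sum>k<n. real (k + m + 1) powr (-q))
      \<le> (real m powr (1 - q) - real (n + m) powr (1 - q)) / (q - 1)" for n
  proof (induction n)
    case (Suc n)
    have "real (n + m + 1) powr (-q)
        \<le> (real (n + m) powr (1 - q) - real (Suc n + m) powr (1 - q)) / (q - 1)"
      using powr_minus_le_diff_powr[OF q, of "real (n + m + 1)"] m by (simp add: add.commute)
    with Suc show ?case using q by (simp add: field_simps)
  qed simp
  have partial_le: "(\<Sum>k<n. real (k + m + 1) powr (-q)) \<le> real m powr (1 - q) / (q - 1)" for n
    using telescope[of n] q by (smt (verit) divide_right_mono powr_ge_zero)
  show summable: "summable (\<lambda>k. real (k + m + 1) powr (-q))"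
    by (rule summableI_nonneg_bounded[OF _ partial_le]) simp
  show "(\<Sum>k. real (k + m + 1) powr (-q)) \<le> real m powr (1 - q) / (q - 1)"
    by (rule suminf_le_const[OF summable partial_le])
qed

lemma
  fixes g :: "nat \<Rightarrow> real" and J p q K1 K2 :: real
  assumes J: "J \<ge> 1" and p: "p \<ge> 0" and q: "q > 1" and K: "K1 \<ge> 0" "K2 \<ge> 0"
    and g_nonneg: "\<And>j. 0 \<le> g j"
    and g_growth: "\<And>j. g j \<le> K1 * real (j + 1) powr p"
    and g_decay: "\<And>j. g j \<le> K2 * J powr (p + q) * real (j + 1) powr (-q)"
  shows summable_growth_decay: "summable g"
    and suminf_growth_decay_le: "suminf g \<le> (K1 + K2 * 2 powr (q - 1) / (q - 1)) * J powr (p + 1)"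
proof -
  define m where "m = nat \<lfloor>J\<rfloor>"
  have m_le: "real m \<le> J" and m1: "m \<ge> 1" and "J < real m + 1"
    using J by (auto simp: m_def le_nat_floor)
  then have m_ge: "J / 2 \<le> real m" by linarith
  define f where
    "f j = (if j < m then K1 * J powr p else K2 * J powr (p + q) * real (j + 1) powr (-q))" for j
  have g_le_f: "g j \<le> f j" for j
  proof (cases "j < m")
    case True
    then have "real (j + 1) powr p \<le> J powr p" using m_le p by (intro powr_mono2) auto
    then show ?thesis
      using g_growth[of j] True K by (simp add: f_def) (meson mult_left_mono order_trans)
  qed (use g_decay in \<open>simp add: f_def\<close>)
  have tail: "(\<lambda>k. f (k + m)) = (\<lambda>k. K2 * J powr (p + q) * real (k + m + 1) powr (-q))"
    by (auto simp: f_def fun_eq_iff)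
  have summable_tail: "summable (\<lambda>k. real (k + m + 1) powr (-q))"
    by (rule summable_powr_tail[OF q m1])
  then have summable_f: "summable f"
    using summable_iff_shift[of f m] unfolding tail by (simp add: summable_mult)
  show summable_g: "summable g"
    by (rule summable_comparison_test[OF _ summable_f]) (use g_nonneg g_le_f in auto)
  have "(\<Sum>k. real (k + m + 1) powr (-q)) \<le> real m powr (1 - q) / (q - 1)"
    by (rule suminf_powr_tail_le[OF q m1])
  also have "\<dots> \<le> (J / 2) powr (1 - q) / (q - 1)"
    using m_ge q J by (intro divide_right_mono powr_mono2') auto
  also have "\<dots> = 2 powr (q - 1) / (q - 1) * J powr (1 - q)"
    using J by (simp add: powr_divide powr_diff field_simps)
  finally have tail_sum_le:
    "(\<Sum>k. real (k + m + 1) powr (-q)) \<le> 2 powr (q - 1) / (q - 1) * J powr (1 - q)" .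
  have "(\<Sum>k. f (k + m)) = K2 * J powr (p + q) * (\<Sum>k. real (k + m + 1) powr (-q))"
    unfolding tail by (rule suminf_mult[OF summable_tail])
  also have "\<dots> \<le> K2 * J powr (p + q) * (2 powr (q - 1) / (q - 1) * J powr (1 - q))"
    using tail_sum_le K by (intro mult_left_mono) auto
  also have "\<dots> = K2 * 2 powr (q - 1) / (q - 1) * J powr (p + 1)"
    using J by (simp add: powr_add[symmetric])
  finally have tail_le: "(\<Sum>k. f (k + m)) \<le> K2 * 2 powr (q - 1) / (q - 1) * J powr (p + 1)" .
  have "(\<Sum>j<m. f j) = real m * (K1 * J powr p)" by (simp add: f_def)
  also have "\<dots> \<le> J * (K1 * J powr p)"
    using m_le K by (intro mult_right_mono) auto
  also have "\<dots> = K1 * J powr (p + 1)"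
    using J by (simp add: powr_add)
  finally have head_le: "(\<Sum>j<m. f j) \<le> K1 * J powr (p + 1)" .
  have "suminf g \<le> suminf f" by (rule suminf_le[OF g_le_f summable_g summable_f])
  also have "\<dots> = (\<Sum>k. f (k + m)) + (\<Sum>j<m. f j)"
    by (rule suminf_split_initial_segment[OF summable_f])
  finally show "suminf g \<le> (K1 + K2 * 2 powr (q - 1) / (q - 1)) * J powr (p + 1)"
    using tail_le head_le by (simp add: distrib_right)
qed

lemma
  fixes S s0 lam c C c1 c2 r \<nu> x :: real
  assumes c: "c > 0" and C: "C > 0" and lam: "lam > 0"
    and S_lower: "c * s0 \<le> S" and S_upper: "S \<le> C * s0"
    and s0_lower: "c1 * x powr (-2*r) \<le> s0" and s0_upper: "s0 \<le> c2 * x powr (-2*r)"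
    and c12: "c1 > 0" "c2 > 0" and \<nu>: "0 \<le> \<nu>" "\<nu> \<le> 1/2" and x: "x \<ge> 1"
  shows spectral_weight_nonneg: "0 \<le> s0 powr (2*\<nu>) * S / (S + lam)\<^sup>2"
    and spectral_weight_le_growth:
      "s0 powr (2*\<nu>) * S / (S + lam)\<^sup>2 \<le> c1 powr (2*\<nu> - 1) / c * x powr (2*r*(1 - 2*\<nu>))"
    and spectral_weight_le_decay:
      "s0 powr (2*\<nu>) * S / (S + lam)\<^sup>2 \<le> C * c2 powr (2*\<nu> + 1) * x powr (-(2*r*(1 + 2*\<nu>))) / lam\<^sup>2"
proof -
  have s0_pos: "s0 > 0" using s0_lower c12 x by (smt (verit) mult_pos_pos powr_gt_zero)
  have S_pos: "S > 0" using S_lower c s0_pos by (smt (verit) mult_pos_pos)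
  show "0 \<le> s0 powr (2*\<nu>) * S / (S + lam)\<^sup>2" using S_pos by simp
  have "S / (S + lam)\<^sup>2 \<le> S / S\<^sup>2"
    using S_pos lam by (intro divide_left_mono power_mono) auto
  also have "\<dots> \<le> 1 / (c * s0)"
    using S_lower c s0_pos S_pos by (simp add: power2_eq_square divide_left_mono)
  finally have "s0 powr (2*\<nu>) * S / (S + lam)\<^sup>2 \<le> s0 powr (2*\<nu>) * (1 / (c * s0))"
    by (simp add: mult_left_mono times_divide_eq_right[symmetric] del: times_divide_eq_right)
  also have "\<dots> = s0 powr (2*\<nu> - 1) / c"
    using s0_pos by (simp add: powr_diff)
  also have "s0 powr (2*\<nu> - 1) \<le> (c1 * x powr (-2*r)) powr (2*\<nu> - 1)"
    using \<nu> s0_lower c12 x by (intro powr_mono2') auto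
  also have "(c1 * x powr (-2*r)) powr (2*\<nu> - 1) = c1 powr (2*\<nu> - 1) * x powr (2*r*(1 - 2*\<nu>))"
    using c12 x by (simp add: powr_mult powr_powr algebra_simps)
  finally show "s0 powr (2*\<nu>) * S / (S + lam)\<^sup>2 \<le> c1 powr (2*\<nu> - 1) / c * x powr (2*r*(1 - 2*\<nu>))"
    using c by (simp add: divide_right_mono)
  have "S / (S + lam)\<^sup>2 \<le> S / lam\<^sup>2"
    using S_pos lam by (intro divide_left_mono power_mono) auto
  also have "\<dots> \<le> C * s0 / lam\<^sup>2" using S_upper lam by (intro divide_right_mono) auto
  finally have "s0 powr (2*\<nu>) * S / (S + lam)\<^sup>2 \<le> s0 powr (2*\<nu>) * (C * s0 / lam\<^sup>2)"
    by (simp add: mult_left_mono times_divide_eq_right[symmetric] del: times_divide_eq_right)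
  also have "\<dots> = C * s0 powr (2*\<nu> + 1) / lam\<^sup>2"
    using s0_pos by (simp add: powr_add)
  also have "s0 powr (2*\<nu> + 1) \<le> (c2 * x powr (-2*r)) powr (2*\<nu> + 1)"
    using \<nu> s0_upper s0_pos by (intro powr_mono2) auto
  also have "(c2 * x powr (-2*r)) powr (2*\<nu> + 1) = c2 powr (2*\<nu> + 1) * x powr (-(2*r*(1 + 2*\<nu>)))"
    using c12 x by (simp add: powr_mult powr_powr algebra_simps)
  finally show "s0 powr (2*\<nu>) * S / (S + lam)\<^sup>2 \<le> C * c2 powr (2*\<nu> + 1) * x powr (-(2*r*(1 + 2*\<nu>))) / lam\<^sup>2"
    using C lam by (simp add: divide_right_mono mult_left_mono mult.assoc)
qed

text \<open>The split point of the sum is \<open>J = lam powr (-1/(2*r))\<close>, where \<open>s0 j\<close> crosses \<open>lam\<close>.\<close>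

lemma spectral_sum_bound:
  fixes s0 :: "nat \<Rightarrow> real" and r \<nu> c C c1 c2 :: real
  assumes r: "r > 1/2" and \<nu>: "0 \<le> \<nu>" "\<nu> \<le> 1/2" and c: "c > 0" and C: "C > 0"
    and c12: "c1 > 0" "c2 > 0"
    and s0_decay: "\<And>j. c1 * (real j + 1) powr (-2*r) \<le> s0 j \<and> s0 j \<le> c2 * (real j + 1) powr (-2*r)"
  obtains D where "D \<ge> 0"
    and "\<And>S lam. (\<And>j. c * s0 j \<le> S j) \<Longrightarrow> (\<And>j. S j \<le> C * s0 j) \<Longrightarrow> 0 < lam \<Longrightarrow> lam \<le> 1 \<Longrightarrow>
      summable (\<lambda>j. s0 j powr (2*\<nu>) * S j / (S j + lam)\<^sup>2) \<and>
      (\<Sum>j. s0 j powr (2*\<nu>) * S j / (S j + lam)\<^sup>2) \<le> D / lam powr (1 - 2*\<nu> + 1/(2*r))"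
proof
  define p where "p = 2*r*(1 - 2*\<nu>)"
  define q where "q = 2*r*(1 + 2*\<nu>)"
  define K1 where "K1 = c1 powr (2*\<nu> - 1) / c"
  define K2 where "K2 = C * c2 powr (2*\<nu> + 1)"
  have p: "p \<ge> 0" using r \<nu> by (simp add: p_def)
  have q: "q > 1"
  proof -
    have "2*r*(1 + 2*\<nu>) \<ge> 2*r*1" using r \<nu> by (intro mult_left_mono) auto
    then show ?thesis using r unfolding q_def by linarith
  qed
  note s0_lower = conjunct1[OF s0_decay] and s0_upper = conjunct2[OF s0_decay]
  have K: "K1 \<ge> 0" "K2 \<ge> 0" using c C by (simp_all add: K1_def K2_def)
  then show "K1 + K2 * 2 powr (q - 1) / (q - 1) \<ge> 0" using q by simp
  fix S :: "nat \<Rightarrow> real" and lam :: real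
  assume S_lower: "\<And>j. c * s0 j \<le> S j" and S_upper: "\<And>j. S j \<le> C * s0 j"
    and lam: "0 < lam" "lam \<le> 1"
  define J where "J = 1 / lam powr (1/(2*r))"
  have "lam powr (1/(2*r)) \<le> 1 powr (1/(2*r))" using lam r by (intro powr_mono2) auto
  then have J: "J \<ge> 1" using lam by (simp add: J_def)
  have J_powr: "J powr a = 1 / lam powr (a / (2*r))" for a
    using lam by (simp add: J_def powr_divide powr_powr)
  have "J powr (p + q) = 1 / lam\<^sup>2"
    using J_powr[of "p + q"] r lam by (simp add: p_def q_def field_simps powr_numeral)
  moreover have "J powr (p + 1) = 1 / lam powr (1 - 2*\<nu> + 1/(2*r))"
    using J_powr[of "p + 1"] r by (simp add: p_def field_simps)
  moreover have "s0 j powr (2*\<nu>) * S j / (S j + lam)\<^sup>2 \<le> K2 * J powr (p + q) * real (j + 1) powr (-q)"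
    and "s0 j powr (2*\<nu>) * S j / (S j + lam)\<^sup>2 \<le> K1 * real (j + 1) powr p"
    and "0 \<le> s0 j powr (2*\<nu>) * S j / (S j + lam)\<^sup>2" for j
    using spectral_weight_le_decay[OF c C lam(1) S_lower S_upper s0_lower s0_upper c12 \<nu>]
      spectral_weight_le_growth[OF c C lam(1) S_lower S_upper s0_lower s0_upper c12 \<nu>]
      spectral_weight_nonneg[OF c C lam(1) S_lower S_upper s0_lower s0_upper c12 \<nu>]
      \<open>J powr (p + q) = 1 / lam\<^sup>2\<close>
    by (simp_all add: K1_def K2_def p_def q_def add.commute)
  ultimately show "summable (\<lambda>j. s0 j powr (2*\<nu>) * S j / (S j + lam)\<^sup>2) \<and>
      (\<Sum>j. s0 j powr (2*\<nu>) * S j / (S j + lam)\<^sup>2)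
        \<le> (K1 + K2 * 2 powr (q - 1) / (q - 1)) / lam powr (1 - 2*\<nu> + 1/(2*r))"
    using summable_growth_decay[OF J p q K] suminf_growth_decay_le[OF J p q K] by auto
qed

section \<open>Independent centred variables\<close>

lemma (in prob_space)
  fixes W :: "'i \<Rightarrow> 'a \<Rightarrow> real"
  assumes I: "finite I" and indep: "indep_vars (\<lambda>_. borel) W I"
    and integrable: "\<And>p. p \<in> I \<Longrightarrow> integrable M (W p)"
    and mean_zero: "\<And>p. p \<in> I \<Longrightarrow> expectation (W p) = 0"
    and square_integrable: "\<And>p. p \<in> I \<Longrightarrow> integrable M (\<lambda>\<omega>. (W p \<omega>)\<^sup>2)"
  shows integrable_square_sum_indep: "integrable M (\<lambda>\<omega>. (\<Sum>p\<in>I. W p \<omega>)\<^sup>2)"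
    and expectation_square_sum_indep:
      "expectation (\<lambda>\<omega>. (\<Sum>p\<in>I. W p \<omega>)\<^sup>2) = (\<Sum>p\<in>I. expectation (\<lambda>\<omega>. (W p \<omega>)\<^sup>2))"
proof -
  have cross: "integrable M (\<lambda>\<omega>. W p \<omega> * W q \<omega>) \<and>
      expectation (\<lambda>\<omega>. W p \<omega> * W q \<omega>) = (if p = q then expectation (\<lambda>\<omega>. (W p \<omega>)\<^sup>2) else 0)"
    if "p \<in> I" "q \<in> I" for p q
  proof (cases "p = q")
    case True then show ?thesis using square_integrable[OF \<open>p \<in> I\<close>] by (simp add: power2_eq_square)
  next
    case False
    have indep_pq: "indep_vars (\<lambda>_. borel) W {p, q}"
      by (rule indep_vars_subset[OF indep]) (use that in auto)
    have product: "(\<lambda>\<omega>. \<Prod>i\<in>{p, q}. W i \<omega>) = (\<lambda>\<omega>. W p \<omega> * W q \<omega>)"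
      using False by auto
    have "integrable M (\<lambda>\<omega>. \<Prod>i\<in>{p, q}. W i \<omega>)"
      by (rule indep_vars_integrable[OF _ indep_pq]) (use that integrable in auto)
    moreover have "expectation (\<lambda>\<omega>. \<Prod>i\<in>{p, q}. W i \<omega>) = (\<Prod>i\<in>{p, q}. expectation (W i))"
      by (rule indep_vars_lebesgue_integral[OF _ indep_pq]) (use that integrable in auto)
    ultimately show ?thesis using product False mean_zero that by simp
  qed
  have square: "(\<lambda>\<omega>. (\<Sum>p\<in>I. W p \<omega>)\<^sup>2) = (\<lambda>\<omega>. \<Sum>p\<in>I. \<Sum>q\<in>I. W p \<omega> * W q \<omega>)"
    by (simp add: power2_eq_square sum_product)
  show "integrable M (\<lambda>\<omega>. (\<Sum>p\<in>I. W p \<omega>)\<^sup>2)"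
    unfolding square using cross by auto
  have "expectation (\<lambda>\<omega>. \<Sum>p\<in>I. \<Sum>q\<in>I. W p \<omega> * W q \<omega>)
      = (\<Sum>p\<in>I. \<Sum>q\<in>I. expectation (\<lambda>\<omega>. W p \<omega> * W q \<omega>))"
    using cross by (simp add: Bochner_Integration.integral_sum)
  also have "\<dots> = (\<Sum>p\<in>I. expectation (\<lambda>\<omega>. (W p \<omega>)\<^sup>2))"
    using cross I by (simp add: sum.delta)
  finally show "expectation (\<lambda>\<omega>. (\<Sum>p\<in>I. W p \<omega>)\<^sup>2) = (\<Sum>p\<in>I. expectation (\<lambda>\<omega>. (W p \<omega>)\<^sup>2))"
    unfolding square .
qed

lemma (in prob_space)
  fixes U V :: "'a \<Rightarrow> real"
  assumes indep: "indep_var borel U borel V"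
    and U_square: "integrable M (\<lambda>\<omega>. (U \<omega>)\<^sup>2)" and V_square: "integrable M (\<lambda>\<omega>. (V \<omega>)\<^sup>2)"
    and V_mean_zero: "expectation V = 0"
  shows integrable_indep_product: "integrable M (\<lambda>\<omega>. U \<omega> * V \<omega>)"
    and expectation_indep_product_mean_zero: "expectation (\<lambda>\<omega>. U \<omega> * V \<omega>) = 0"
    and integrable_square_indep_product: "integrable M (\<lambda>\<omega>. (U \<omega> * V \<omega>)\<^sup>2)"
    and expectation_square_indep_product:
      "expectation (\<lambda>\<omega>. (U \<omega> * V \<omega>)\<^sup>2) = expectation (\<lambda>\<omega>. (U \<omega>)\<^sup>2) * expectation (\<lambda>\<omega>. (V \<omega>)\<^sup>2)"
proof -
  have U: "integrable M U" and V: "integrable M V"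
    using indep_var_rv1[OF indep] indep_var_rv2[OF indep] U_square V_square
    by (auto intro: square_integrable_imp_integrable)
  show "integrable M (\<lambda>\<omega>. U \<omega> * V \<omega>)" by (rule indep_var_integrable[OF indep U V])
  show "expectation (\<lambda>\<omega>. U \<omega> * V \<omega>) = 0"
    using indep_var_lebesgue_integral[OF indep U V] V_mean_zero by simp
  have "indep_var borel ((\<lambda>x. x\<^sup>2) \<circ> U) borel ((\<lambda>x. x\<^sup>2) \<circ> V)"
    by (rule indep_var_compose[OF indep]) auto
  then have indep_squares: "indep_var borel (\<lambda>\<omega>. (U \<omega>)\<^sup>2) borel (\<lambda>\<omega>. (V \<omega>)\<^sup>2)"
    by (simp add: comp_def)
  show "integrable M (\<lambda>\<omega>. (U \<omega> * V \<omega>)\<^sup>2)"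
    using indep_var_integrable[OF indep_squares U_square V_square] by (simp add: power_mult_distrib)
  show "expectation (\<lambda>\<omega>. (U \<omega> * V \<omega>)\<^sup>2) = expectation (\<lambda>\<omega>. (U \<omega>)\<^sup>2) * expectation (\<lambda>\<omega>. (V \<omega>)\<^sup>2)"
    using indep_var_lebesgue_integral[OF indep_squares U_square V_square]
    by (simp add: power_mult_distrib)
qed

lemma (in prob_space) indep_var_compose_indep_set:
  fixes f :: "'b::topological_space \<Rightarrow> real" and Y :: "'a \<Rightarrow> real"
  assumes indep: "indep_set (sigma_sets (space M) {X -` A \<inter> space M | A. A \<in> sets borel})
                            (sigma_sets (space M) {Y -` A \<inter> space M | A. A \<in> sets borel})"
    and X: "X \<in> borel_measurable M" and Y: "Y \<in> borel_measurable M"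
    and f: "f \<in> borel_measurable borel"
  shows "indep_var borel (\<lambda>\<omega>. f (X \<omega>)) borel Y"
proof -
  have "{(\<lambda>\<omega>. f (X \<omega>)) -` A \<inter> space M | A. A \<in> sets borel}
      \<subseteq> {X -` A \<inter> space M | A. A \<in> sets borel}"
  proof
    fix B assume "B \<in> {(\<lambda>\<omega>. f (X \<omega>)) -` A \<inter> space M | A. A \<in> sets borel}"
    then obtain A where "A \<in> sets borel" and "B = X -` (f -` A) \<inter> space M" by auto
    moreover have "f -` A \<in> sets borel" using measurable_sets[OF f \<open>A \<in> sets borel\<close>] by simp
    ultimately show "B \<in> {X -` A \<inter> space M | A. A \<in> sets borel}" by blast
  qed
  then have generated_sub: "sigma_sets (space M) {(\<lambda>\<omega>. f (X \<omega>)) -` A \<inter> space M | A. A \<in> sets borel}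
      \<subseteq> sigma_sets (space M) {X -` A \<inter> space M | A. A \<in> sets borel}"
    by (rule sigma_sets_subseteq)
  have "indep_set (sigma_sets (space M) {(\<lambda>\<omega>. f (X \<omega>)) -` A \<inter> space M | A. A \<in> sets borel})
                       (sigma_sets (space M) {Y -` A \<inter> space M | A. A \<in> sets borel})"
    using indep unfolding indep_set_def
    by (rule indep_sets_mono_sets) (use generated_sub in \<open>auto split: bool.split\<close>)
  moreover have "random_variable borel (\<lambda>\<omega>. f (X \<omega>))"
    using X f by (rule measurable_compose)
  ultimately show ?thesis using Y by (simp add: indep_var_eq)
qed

lemma (in prob_space) measure_exceeds_le_Markov:
  fixes Q :: "'a \<Rightarrow> real"
  assumes "integrable M Q" and "\<And>\<omega>. 0 \<le> Q \<omega>"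
    and "expectation Q \<le> D / k" and "k > 0" and "B > 0"
  shows "measure M {\<omega> \<in> space M. Q \<omega> > B / k} \<le> D / B"
proof -
  have "measure M {\<omega> \<in> space M. Q \<omega> > B / k} \<le> measure M {\<omega> \<in> space M. Q \<omega> \<ge> B / k}"
    using \<open>integrable M Q\<close> by (intro finite_measure_mono) auto
  also have "\<dots> \<le> expectation Q / (B / k)"
    using assms by (intro integral_Markov_inequality_measure[where A="space M"]) auto
  also have "\<dots> \<le> (D / k) / (B / k)"
    using assms by (intro divide_right_mono) auto
  also have "\<dots> = D / B" using assms by simp
  finally show ?thesis .
qed

section \<open>The transfer-learning noise model\<close>

locale transfer_noise_model = prob_space M
  for M :: "'w measure" +
  fixes Sst :: "nat set"
    and X :: "nat \<Rightarrow> nat \<Rightarrow> 'w \<Rightarrow> 'a::{real_inner, complete_space}"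
    and eps :: "nat \<Rightarrow> nat \<Rightarrow> 'w \<Rightarrow> real"
    and sigma2 :: "nat \<Rightarrow> real"
    and Khalf :: "'a \<Rightarrow> 'a"
    and Cop :: "nat \<Rightarrow> 'a \<Rightarrow> 'a"
    and \<phi> :: "nat \<Rightarrow> 'a"
    and s :: "nat \<Rightarrow> nat \<Rightarrow> real"
  assumes finite_Sst: "finite Sst"
    and meas: "\<forall>l\<in>Sst. \<forall>i. X l i \<in> borel_measurable M \<and> eps l i \<in> borel_measurable M"
    and indep: "indep_vars (\<lambda>_. borel) (\<lambda>(l, i) \<omega>. (X l i \<omega>, eps l i \<omega>)) (Sst \<times> UNIV)"
    and indep_eps: "\<forall>l\<in>Sst. \<forall>i. indep_set
                   (sigma_sets (space M) {X l i -` A \<inter> space M | A. A \<in> sets borel})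
                   (sigma_sets (space M) {eps l i -` A \<inter> space M | A. A \<in> sets borel})"
    and X_L2: "\<forall>l\<in>Sst. \<forall>i. integrable M (\<lambda>\<omega>. (norm (X l i \<omega>))\<^sup>2)"
    and X_cov: "\<forall>l\<in>Sst. \<forall>i. \<forall>f g.
                  integral\<^sup>L M (\<lambda>\<omega>. (X l i \<omega> \<bullet> f) * (X l i \<omega> \<bullet> g)) = Cop l f \<bullet> g"
    and eps_L2: "\<forall>l\<in>Sst. \<forall>i. integrable M (\<lambda>\<omega>. (eps l i \<omega>)\<^sup>2)"
    and eps_mean0: "\<forall>l\<in>Sst. \<forall>i. integral\<^sup>L M (eps l i) = 0"
    and eps_var: "\<forall>l\<in>Sst. \<forall>i. integral\<^sup>L M (\<lambda>\<omega>. (eps l i \<omega>)\<^sup>2) = sigma2 l"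
    and Khalf_sa: "\<forall>x y. Khalf x \<bullet> y = x \<bullet> Khalf y"
    and basis_on: "\<forall>j k. \<phi> j \<bullet> \<phi> k = (if j = k then 1 else 0)"
    and basis_complete: "closure (span (range \<phi>)) = UNIV"
    and eig: "\<forall>l\<in>Sst. \<forall>j. Khalf (Cop l (Khalf (\<phi> j))) = s l j *\<^sub>R \<phi> j"
begin

text \<open>\<open>Khalf\<close> is \<open>L_{K^(1/2)}\<close>, \<open>Cop l\<close> is \<open>L_{C^(l)}\<close> and \<open>s l\<close> lists the eigenvalues of
  \<open>L_{T^(l)}\<close> in the basis \<open>\<phi>\<close>; \<open>score nl \<omega> / N\<close> is the paper's \<open>\<Sum>l. g_ln\<close>.\<close>

abbreviation score :: "(nat \<Rightarrow> nat) \<Rightarrow> 'w \<Rightarrow> 'a" where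
  "score nl \<omega> \<equiv> \<Sum>l\<in>Sst. \<Sum>i<nl l. eps l i \<omega> *\<^sub>R Khalf (X l i \<omega>)"

abbreviation regularized_op :: "(nat \<Rightarrow> real) \<Rightarrow> real \<Rightarrow> 'a \<Rightarrow> 'a" where
  "regularized_op \<alpha> lam \<equiv> \<lambda>x. (\<Sum>l\<in>Sst. \<alpha> l *\<^sub>R Khalf (Cop l (Khalf x))) + lam *\<^sub>R x"

lemma cov_op_inner_basis:
  assumes "l \<in> Sst"
  shows "Khalf (Cop l (Khalf x)) \<bullet> \<phi> k = s l k * (x \<bullet> \<phi> k)"
proof -
  \<comment> \<open>\<open>Cop l\<close> is symmetric, being a covariance: read it off from any sample, here \<open>i = 0\<close>.\<close>
  have "Khalf (Cop l (Khalf x)) \<bullet> \<phi> k = Cop l (Khalf x) \<bullet> Khalf (\<phi> k)"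
    using Khalf_sa by simp
  also have "\<dots> = expectation (\<lambda>\<omega>. (X l 0 \<omega> \<bullet> Khalf (\<phi> k)) * (X l 0 \<omega> \<bullet> Khalf x))"
    using X_cov assms by (simp add: mult.commute)
  also have "\<dots> = Khalf (Cop l (Khalf (\<phi> k))) \<bullet> x"
    using X_cov Khalf_sa assms by simp
  also have "\<dots> = s l k * (x \<bullet> \<phi> k)"
    using eig assms by (simp add: inner_commute)
  finally show ?thesis .
qed

lemma cov_inner_basis:
  assumes "l \<in> Sst"
  shows "Cop l (Khalf (\<phi> j)) \<bullet> Khalf (\<phi> j) = s l j"
  using Khalf_sa eig basis_on assms by (metis inner_commute inner_scaleR_left mult.right_neutral)

lemma spectrum_nonneg:
  assumes "l \<in> Sst"
  shows "0 \<le> s l j"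
proof -
  have "s l j = expectation (\<lambda>\<omega>. (X l 0 \<omega> \<bullet> Khalf (\<phi> j))\<^sup>2)"
    using X_cov cov_inner_basis assms by (simp add: power2_eq_square)
  then show ?thesis by simp
qed

lemma noise_variance_nonneg: "l \<in> Sst \<Longrightarrow> 0 \<le> sigma2 l"
  using eps_var by (metis integral_nonneg_AE zero_le_power2 AE_I2)

lemma borel_measurable_inner_covariate:
  assumes "l \<in> Sst"
  shows "(\<lambda>\<omega>. X l i \<omega> \<bullet> v) \<in> borel_measurable M"
  using meas assms
  by (intro measurable_compose[OF _ borel_measurable_continuous_onI[of "\<lambda>x. x \<bullet> v"]])
    (auto intro: continuous_intros)

lemma integrable_inner_square:
  assumes l: "l \<in> Sst"
  shows "integrable M (\<lambda>\<omega>. (X l i \<omega> \<bullet> v)\<^sup>2)"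
proof (rule Bochner_Integration.integrable_bound)
  show "integrable M (\<lambda>\<omega>. (norm v)\<^sup>2 * (norm (X l i \<omega>))\<^sup>2)"
    using X_L2 l by simp
  show "(\<lambda>\<omega>. (X l i \<omega> \<bullet> v)\<^sup>2) \<in> borel_measurable M"
    using borel_measurable_inner_covariate[OF l] by measurable
  have "\<bar>X l i \<omega> \<bullet> v\<bar>\<^sup>2 \<le> (norm (X l i \<omega>) * norm v)\<^sup>2" for \<omega>
    by (intro power_mono Cauchy_Schwarz_ineq2) simp
  then show "AE \<omega> in M. norm ((X l i \<omega> \<bullet> v)\<^sup>2) \<le> norm ((norm v)\<^sup>2 * (norm (X l i \<omega>))\<^sup>2)"
    by (simp add: power_mult_distrib mult.commute)
qed

lemma indep_covariate_noise:
  assumes "l \<in> Sst"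
  shows "indep_var borel (\<lambda>\<omega>. X l i \<omega> \<bullet> v) borel (eps l i)"
  using indep_eps meas assms
  by (intro indep_var_compose_indep_set borel_measurable_continuous_onI continuous_intros) auto

lemma
  assumes l: "l \<in> Sst"
  shows integrable_noise_term: "integrable M (\<lambda>\<omega>. (X l i \<omega> \<bullet> v) * eps l i \<omega>)"
    and expectation_noise_term: "expectation (\<lambda>\<omega>. (X l i \<omega> \<bullet> v) * eps l i \<omega>) = 0"
    and integrable_noise_term_square: "integrable M (\<lambda>\<omega>. ((X l i \<omega> \<bullet> v) * eps l i \<omega>)\<^sup>2)"
    and expectation_noise_term_square:
      "expectation (\<lambda>\<omega>. ((X l i \<omega> \<bullet> v) * eps l i \<omega>)\<^sup>2) = (Cop l v \<bullet> v) * sigma2 l"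
proof -
  note product_hyps = indep_covariate_noise[OF l] integrable_inner_square[OF l]
    eps_L2[rule_format, OF l] eps_mean0[rule_format, OF l]
  show "integrable M (\<lambda>\<omega>. (X l i \<omega> \<bullet> v) * eps l i \<omega>)"
    by (rule integrable_indep_product[OF product_hyps])
  show "expectation (\<lambda>\<omega>. (X l i \<omega> \<bullet> v) * eps l i \<omega>) = 0"
    by (rule expectation_indep_product_mean_zero[OF product_hyps])
  show "integrable M (\<lambda>\<omega>. ((X l i \<omega> \<bullet> v) * eps l i \<omega>)\<^sup>2)"
    by (rule integrable_square_indep_product[OF product_hyps])
  show "expectation (\<lambda>\<omega>. ((X l i \<omega> \<bullet> v) * eps l i \<omega>)\<^sup>2) = (Cop l v \<bullet> v) * sigma2 l"
    using expectation_square_indep_product[OF product_hyps] X_cov eps_var l by (simp add: power2_eq_square)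
qed

lemma score_inner_basis:
  "score nl \<omega> \<bullet> \<phi> j
     = (\<Sum>(l, i)\<in>Sigma Sst (\<lambda>l. {..<nl l}). (X l i \<omega> \<bullet> Khalf (\<phi> j)) * eps l i \<omega>)"
proof -
  have "score nl \<omega> \<bullet> \<phi> j = (\<Sum>l\<in>Sst. \<Sum>i<nl l. (X l i \<omega> \<bullet> Khalf (\<phi> j)) * eps l i \<omega>)"
    by (simp add: inner_sum_left Khalf_sa mult.commute)
  then show ?thesis using finite_Sst by (simp add: sum.Sigma split_beta)
qed

lemma
  shows integrable_score_inner_square: "integrable M (\<lambda>\<omega>. (score nl \<omega> \<bullet> \<phi> j)\<^sup>2)"
    and expectation_score_inner_square:
      "expectation (\<lambda>\<omega>. (score nl \<omega> \<bullet> \<phi> j)\<^sup>2) = (\<Sum>l\<in>Sst. real (nl l) * (s l j * sigma2 l))"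
proof -
  define I where "I = Sigma Sst (\<lambda>l. {..<nl l})"
  define W where "W = (\<lambda>p \<omega>. (X (fst p) (snd p) \<omega> \<bullet> Khalf (\<phi> j)) * eps (fst p) (snd p) \<omega>)"
  have score_eq: "(\<lambda>\<omega>. (score nl \<omega> \<bullet> \<phi> j)\<^sup>2) = (\<lambda>\<omega>. (\<Sum>p\<in>I. W p \<omega>)\<^sup>2)"
    by (simp add: score_inner_basis I_def W_def split_beta)
  have "finite I" using finite_Sst by (simp add: I_def)
  have "indep_vars (\<lambda>_. borel)
      (\<lambda>p \<omega>. (\<lambda>z. (fst z \<bullet> Khalf (\<phi> j)) * snd z) ((\<lambda>(l, i) \<omega>. (X l i \<omega>, eps l i \<omega>)) p \<omega>)) I"
    by (rule indep_vars_compose2[OF indep_vars_subset[OF indep]])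
       (auto simp: I_def intro!: borel_measurable_continuous_onI continuous_intros)
  then have indep_W: "indep_vars (\<lambda>_. borel) W I"
    by (simp add: W_def split_beta)
  have "p \<in> I \<Longrightarrow> fst p \<in> Sst" for p by (auto simp: I_def)
  note moments = integrable_noise_term[OF this] expectation_noise_term[OF this]
    integrable_noise_term_square[OF this] expectation_noise_term_square[OF this]
  show "integrable M (\<lambda>\<omega>. (score nl \<omega> \<bullet> \<phi> j)\<^sup>2)"
    unfolding score_eq using moments
    by (intro integrable_square_sum_indep[OF \<open>finite I\<close> indep_W]) (auto simp: W_def)
  have "expectation (\<lambda>\<omega>. (\<Sum>p\<in>I. W p \<omega>)\<^sup>2) = (\<Sum>p\<in>I. expectation (\<lambda>\<omega>. (W p \<omega>)\<^sup>2))"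
    using moments by (intro expectation_square_sum_indep[OF \<open>finite I\<close> indep_W]) (auto simp: W_def)
  also have "\<dots> = (\<Sum>p\<in>I. s (fst p) j * sigma2 (fst p))"
    using moments(4) cov_inner_basis by (intro sum.cong) (auto simp: W_def I_def)
  also have "\<dots> = (\<Sum>l\<in>Sst. \<Sum>i<nl l. s l j * sigma2 l)"
    unfolding I_def using finite_Sst by (subst sum.Sigma) (auto simp: split_beta)
  also have "\<dots> = (\<Sum>l\<in>Sst. real (nl l) * (s l j * sigma2 l))"
    by simp
  finally show "expectation (\<lambda>\<omega>. (score nl \<omega> \<bullet> \<phi> j)\<^sup>2) = (\<Sum>l\<in>Sst. real (nl l) * (s l j * sigma2 l))"
    unfolding score_eq .
qed

lemma
  fixes w :: "nat \<Rightarrow> real"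
  assumes S_nonneg: "\<And>j. 0 \<le> (\<Sum>l\<in>Sst. \<alpha> l * s l j)" and "lam > 0"
    and w: "\<And>j. 0 \<le> w j" "\<And>j. w j \<le> K" and "\<nu> \<ge> 0"
  shows summable_regularized_inv_coeffs:
      "summable (\<lambda>j. (w j powr \<nu> * ((y \<bullet> \<phi> j) / ((\<Sum>l\<in>Sst. \<alpha> l * s l j) + lam)))\<^sup>2)"
    and norm_op_powr_eig_regularized_inv_sq:
      "(norm (op_powr_eig \<phi> w \<nu> (inv (regularized_op \<alpha> lam) y)))\<^sup>2
         = (\<Sum>j. (w j powr \<nu> * ((y \<bullet> \<phi> j) / ((\<Sum>l\<in>Sst. \<alpha> l * s l j) + lam)))\<^sup>2)"
proof -
  have "regularized_op \<alpha> lam x \<bullet> \<phi> k = ((\<Sum>l\<in>Sst. \<alpha> l * s l k) + lam) * (x \<bullet> \<phi> k)" for x k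
    by (simp add: inner_add_left inner_sum_left cov_op_inner_basis distrib_right sum_distrib_right
        mult.assoc cong: sum.cong)
  then have coeff: "inv (regularized_op \<alpha> lam) y \<bullet> \<phi> k
      = (y \<bullet> \<phi> k) / ((\<Sum>l\<in>Sst. \<alpha> l * s l k) + lam)" for k
    using S_nonneg \<open>lam > 0\<close>
    by (intro inner_inv_diagonal[OF basis_on basis_complete, where lam = lam]) auto
  show "summable (\<lambda>j. (w j powr \<nu> * ((y \<bullet> \<phi> j) / ((\<Sum>l\<in>Sst. \<alpha> l * s l j) + lam)))\<^sup>2)"
    using summable_op_powr_eig_coeffs[where s = w and x = "inv (regularized_op \<alpha> lam) y",
        OF basis_on w \<open>\<nu> \<ge> 0\<close>]
    by (simp add: coeff)
  show "(norm (op_powr_eig \<phi> w \<nu> (inv (regularized_op \<alpha> lam) y)))\<^sup>2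
      = (\<Sum>j. (w j powr \<nu> * ((y \<bullet> \<phi> j) / ((\<Sum>l\<in>Sst. \<alpha> l * s l j) + lam)))\<^sup>2)"
    using norm_op_powr_eig_sq[where s = w, OF basis_on w \<open>\<nu> \<ge> 0\<close>] by (simp add: coeff)
qed

lemma
  fixes w :: "nat \<Rightarrow> real"
  assumes S_nonneg: "\<And>j. 0 \<le> (\<Sum>l\<in>Sst. \<alpha> l * s l j)" and "lam > 0"
    and w: "\<And>j. 0 \<le> w j" "\<And>j. w j \<le> K" and "\<nu> \<ge> 0"
    and summable: "summable (\<lambda>j. (a * w j powr \<nu> / ((\<Sum>l\<in>Sst. \<alpha> l * s l j) + lam))\<^sup>2
                                * (\<Sum>l\<in>Sst. real (nl l) * (s l j * sigma2 l)))"
  shows integrable_norm_sq_regularized_score: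
      "integrable M (\<lambda>\<omega>. (norm (op_powr_eig \<phi> w \<nu> (inv (regularized_op \<alpha> lam) (a *\<^sub>R score nl \<omega>))))\<^sup>2)"
    and expectation_norm_sq_regularized_score:
      "expectation (\<lambda>\<omega>. (norm (op_powr_eig \<phi> w \<nu> (inv (regularized_op \<alpha> lam) (a *\<^sub>R score nl \<omega>))))\<^sup>2)
         = (\<Sum>j. (a * w j powr \<nu> / ((\<Sum>l\<in>Sst. \<alpha> l * s l j) + lam))\<^sup>2
                  * (\<Sum>l\<in>Sst. real (nl l) * (s l j * sigma2 l)))"
proof -
  define \<kappa> where "\<kappa> j = (a * w j powr \<nu> / ((\<Sum>l\<in>Sst. \<alpha> l * s l j) + lam))\<^sup>2" for j
  define Z where "Z j \<omega> = \<kappa> j * (score nl \<omega> \<bullet> \<phi> j)\<^sup>2" for j \<omega>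
  have norm_eq: "(norm (op_powr_eig \<phi> w \<nu> (inv (regularized_op \<alpha> lam) (a *\<^sub>R score nl \<omega>))))\<^sup>2
      = (\<Sum>j. Z j \<omega>)" for \<omega>
    using norm_op_powr_eig_regularized_inv_sq[where w = w, OF S_nonneg \<open>lam > 0\<close> w \<open>\<nu> \<ge> 0\<close>]
    by (simp add: Z_def \<kappa>_def power_mult_distrib power_divide mult_ac)
  have Z_summable: "summable (\<lambda>j. Z j \<omega>)" for \<omega>
    using summable_regularized_inv_coeffs[where w = w and y = "a *\<^sub>R score nl \<omega>",
        OF S_nonneg \<open>lam > 0\<close> w \<open>\<nu> \<ge> 0\<close>]
    by (simp add: Z_def \<kappa>_def power_mult_distrib power_divide mult_ac)
  have Z_integrable: "integrable M (Z j)" for j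
    using integrable_score_inner_square by (simp add: Z_def[abs_def])
  have Z_expectation: "expectation (Z j) = \<kappa> j * (\<Sum>l\<in>Sst. real (nl l) * (s l j * sigma2 l))" for j
    using expectation_score_inner_square by (simp add: Z_def[abs_def])
  have Z_nonneg: "0 \<le> Z j \<omega>" for j \<omega> by (simp add: Z_def \<kappa>_def)
  note suminf_facts = integrable_suminf[OF Z_integrable] integral_suminf[OF Z_integrable]
  have "summable (\<lambda>j. expectation (\<lambda>\<omega>. norm (Z j \<omega>)))"
    using summable Z_nonneg by (simp add: Z_expectation \<kappa>_def)
  then show "integrable M (\<lambda>\<omega>. (norm (op_powr_eig \<phi> w \<nu> (inv (regularized_op \<alpha> lam) (a *\<^sub>R score nl \<omega>))))\<^sup>2)"
    and "expectation (\<lambda>\<omega>. (norm (op_powr_eig \<phi> w \<nu> (inv (regularized_op \<alpha> lam) (a *\<^sub>R score nl \<omega>))))\<^sup>2)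
      = (\<Sum>j. (a * w j powr \<nu> / ((\<Sum>l\<in>Sst. \<alpha> l * s l j) + lam))\<^sup>2
               * (\<Sum>l\<in>Sst. real (nl l) * (s l j * sigma2 l)))"
    using suminf_facts Z_summable Z_nonneg by (simp_all add: norm_eq Z_expectation \<kappa>_def)
qed

definition noise_error :: "real \<Rightarrow> (nat \<Rightarrow> nat) \<Rightarrow> real \<Rightarrow> 'w \<Rightarrow> real" where
  "noise_error \<nu> nl lam \<omega> =
     (let N = (\<Sum>l\<in>Sst. nl l); \<alpha> = (\<lambda>l. real (nl l) / real N) in
      (norm (op_powr_eig \<phi> (s 0) \<nu> (inv (regularized_op \<alpha> lam) ((1 / real N) *\<^sub>R score nl \<omega>))))\<^sup>2)"

lemma mixture_spectrum_le:
  assumes "(\<Sum>l\<in>Sst. \<alpha> l) = 1" and "\<And>l. 0 \<le> \<alpha> l" and "\<forall>l\<in>Sst. \<forall>j. s l j \<le> C * s 0 j"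
  shows "(\<Sum>l\<in>Sst. \<alpha> l * s l j) \<le> C * s 0 j"
proof -
  have "(\<Sum>l\<in>Sst. \<alpha> l * s l j) \<le> (\<Sum>l\<in>Sst. \<alpha> l * (C * s 0 j))"
    using assms by (intro sum_mono mult_left_mono) auto
  also have "\<dots> = C * s 0 j"
    using assms(1) by (simp add: sum_distrib_right[symmetric])
  finally show ?thesis .
qed

lemma noise_moment_le_mixture:
  assumes "real (\<Sum>l\<in>Sst. nl l) > 0"
  shows "(\<Sum>l\<in>Sst. real (nl l) * (s l j * sigma2 l))
    \<le> (\<Sum>l\<in>Sst. sigma2 l) * real (\<Sum>l\<in>Sst. nl l) * (\<Sum>l\<in>Sst. real (nl l) / real (\<Sum>l\<in>Sst. nl l) * s l j)"
proof -
  have "sigma2 l \<le> (\<Sum>l\<in>Sst. sigma2 l)" if "l \<in> Sst" for l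
    using that finite_Sst noise_variance_nonneg by (intro member_le_sum) auto
  then have "(\<Sum>l\<in>Sst. real (nl l) * (s l j * sigma2 l))
      \<le> (\<Sum>l\<in>Sst. real (nl l) * (s l j * (\<Sum>l\<in>Sst. sigma2 l)))"
    using spectrum_nonneg by (intro sum_mono mult_left_mono) auto
  also have "\<dots> = (\<Sum>l\<in>Sst. sigma2 l) * (\<Sum>l\<in>Sst. real (nl l) * s l j)"
    by (simp add: sum_distrib_left sum_distrib_right mult_ac)
  also have "(\<Sum>l\<in>Sst. real (nl l) * s l j)
      = real (\<Sum>l\<in>Sst. nl l) * (\<Sum>l\<in>Sst. real (nl l) / real (\<Sum>l\<in>Sst. nl l) * s l j)"
    using assms by (simp add: sum_distrib_left del: of_nat_sum)
  finally show ?thesis by (simp add: mult.assoc)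
qed

lemma
  fixes nl :: "nat \<Rightarrow> nat"
  defines "N \<equiv> \<Sum>l\<in>Sst. nl l"
    and "S \<equiv> \<lambda>j. \<Sum>l\<in>Sst. real (nl l) / real (\<Sum>l\<in>Sst. nl l) * s l j"
  assumes "N \<ge> 1" and "0 < lam" and "0 \<le> \<nu>"
    and s0: "\<And>j. 0 \<le> s 0 j" "\<And>j. s 0 j \<le> K"
    and summable: "summable (\<lambda>j. s 0 j powr (2*\<nu>) * S j / (S j + lam)\<^sup>2)"
  shows integrable_noise_error: "integrable M (noise_error \<nu> nl lam)"
    and expectation_noise_error_le: "expectation (noise_error \<nu> nl lam)
      \<le> (\<Sum>l\<in>Sst. sigma2 l) / real N * (\<Sum>j. s 0 j powr (2*\<nu>) * S j / (S j + lam)\<^sup>2)"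
proof -
  define \<alpha> where "\<alpha> = (\<lambda>l. real (nl l) / real N)"
  define \<sigma> where "\<sigma> = (\<Sum>l\<in>Sst. sigma2 l)"
  define g where "g j = s 0 j powr (2*\<nu>) * S j / (S j + lam)\<^sup>2" for j
  define t where "t j = (1 / real N * s 0 j powr \<nu> / (S j + lam))\<^sup>2
    * (\<Sum>l\<in>Sst. real (nl l) * (s l j * sigma2 l))" for j
  have "real N > 0" using \<open>N \<ge> 1\<close> by simp
  have S_nonneg: "0 \<le> (\<Sum>l\<in>Sst. \<alpha> l * s l j)" for j
    using spectrum_nonneg by (simp add: \<alpha>_def sum_nonneg)
  have t_nonneg: "0 \<le> t j" for j
    unfolding t_def using spectrum_nonneg noise_variance_nonneg by (simp add: sum_nonneg)
  have rescale: "(1 / real N * p / d)\<^sup>2 * (\<sigma> * real N * y) = \<sigma> / real N * (p\<^sup>2 * y / d\<^sup>2)"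
    for p d y :: real
    using \<open>real N > 0\<close> by (simp add: power_divide power_mult_distrib power2_eq_square mult_ac)
  have t_le: "t j \<le> \<sigma> / real N * g j" for j
  proof -
    have power: "(s 0 j powr \<nu>)\<^sup>2 = s 0 j powr (2*\<nu>)"
      by (metis mult_2 powr_add power2_eq_square)
    have "t j \<le> (1 / real N * s 0 j powr \<nu> / (S j + lam))\<^sup>2 * (\<sigma> * real N * S j)"
      unfolding t_def \<sigma>_def S_def N_def
      using noise_moment_le_mixture \<open>real N > 0\<close> by (intro mult_left_mono) (auto simp: N_def)
    also have "\<dots> = \<sigma> / real N * ((s 0 j powr \<nu>)\<^sup>2 * S j / (S j + lam)\<^sup>2)"
      by (rule rescale)
    also have "\<dots> = \<sigma> / real N * g j"
      unfolding g_def power ..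
    finally show ?thesis .
  qed
  have "summable g" using summable by (simp add: g_def[abs_def])
  then have "summable t"
    using t_nonneg t_le
    by (intro summable_comparison_test[OF _ summable_mult[OF \<open>summable g\<close>, of "\<sigma> / real N"]]) auto
  have error_eq: "noise_error \<nu> nl lam = (\<lambda>\<omega>.
      (norm (op_powr_eig \<phi> (s 0) \<nu> (inv (regularized_op \<alpha> lam) ((1 / real N) *\<^sub>R score nl \<omega>))))\<^sup>2)"
    unfolding noise_error_def[abs_def] Let_def \<alpha>_def N_def ..
  have t_eq: "t = (\<lambda>j. (1 / real N * s 0 j powr \<nu> / ((\<Sum>l\<in>Sst. \<alpha> l * s l j) + lam))\<^sup>2
      * (\<Sum>l\<in>Sst. real (nl l) * (s l j * sigma2 l)))"
    unfolding t_def[abs_def] S_def \<alpha>_def N_def ..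
  note regularized_score = S_nonneg \<open>0 < lam\<close> s0 \<open>0 \<le> \<nu>\<close> \<open>summable t\<close>[unfolded t_eq]
  show "integrable M (noise_error \<nu> nl lam)"
    unfolding error_eq by (rule integrable_norm_sq_regularized_score[OF regularized_score])
  have "expectation (noise_error \<nu> nl lam) = suminf t"
    unfolding error_eq t_eq by (rule expectation_norm_sq_regularized_score[OF regularized_score])
  also have "\<dots> \<le> (\<Sum>j. \<sigma> / real N * g j)"
    by (rule suminf_le[OF t_le \<open>summable t\<close> summable_mult[OF \<open>summable g\<close>]])
  also have "\<dots> = \<sigma> / real N * suminf g"
    by (rule suminf_mult[OF \<open>summable g\<close>])
  finally show "expectation (noise_error \<nu> nl lam)
      \<le> (\<Sum>l\<in>Sst. sigma2 l) / real N * (\<Sum>j. s 0 j powr (2*\<nu>) * S j / (S j + lam)\<^sup>2)"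
    by (simp add: \<sigma>_def g_def[abs_def])
qed

end

locale transfer_noise_model_decay = transfer_noise_model +
  fixes r \<nu> c C c1 c2 :: real
  assumes r: "r > 1/2" and \<nu>: "0 \<le> \<nu>" "\<nu> \<le> 1/2" and c: "c > 0" and C: "C > 0"
    and c12: "c1 > 0" "c2 > 0"
    and s0_decay: "\<And>j. c1 * (real j + 1) powr (-2*r) \<le> s 0 j \<and> s 0 j \<le> c2 * (real j + 1) powr (-2*r)"
    and s_upper: "\<forall>l\<in>Sst. \<forall>j. s l j \<le> C * s 0 j"
begin

lemma expectation_noise_error_bound:
  obtains D where "D \<ge> 0"
    and "\<And>nl lam. (\<Sum>l\<in>Sst. nl l) \<ge> 1 \<Longrightarrow>
      (\<forall>j. c * s 0 j \<le> (\<Sum>l\<in>Sst. real (nl l) / real (\<Sum>l\<in>Sst. nl l) * s l j)) \<Longrightarrow>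
      0 < lam \<Longrightarrow> lam \<le> 1 \<Longrightarrow>
      integrable M (noise_error \<nu> nl lam) \<and>
      expectation (noise_error \<nu> nl lam) \<le> D / (real (\<Sum>l\<in>Sst. nl l) * lam powr (1 - 2*\<nu> + 1/(2*r)))"
proof (rule spectral_sum_bound[OF r \<nu> c C c12 s0_decay])
  fix D0 assume "D0 \<ge> 0" and spectral: "\<And>S lam. (\<And>j. c * s 0 j \<le> S j) \<Longrightarrow> (\<And>j. S j \<le> C * s 0 j) \<Longrightarrow>
      0 < lam \<Longrightarrow> lam \<le> 1 \<Longrightarrow>
      summable (\<lambda>j. s 0 j powr (2*\<nu>) * S j / (S j + lam)\<^sup>2) \<and>
      (\<Sum>j. s 0 j powr (2*\<nu>) * S j / (S j + lam)\<^sup>2) \<le> D0 / lam powr (1 - 2*\<nu> + 1/(2*r))"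
  define \<sigma> where "\<sigma> = (\<Sum>l\<in>Sst. sigma2 l)"
  have "\<sigma> \<ge> 0" using noise_variance_nonneg by (simp add: \<sigma>_def sum_nonneg)
  have s0_nonneg: "0 \<le> s 0 j" for j
  proof -
    have "0 < c1 * (real j + 1) powr (-2*r)" using c12 by simp
    then show ?thesis using s0_decay[of j] by linarith
  qed
  have s0_le: "s 0 j \<le> c2" for j
  proof -
    have "(real j + 1) powr (-2*r) \<le> (real j + 1) powr 0" using r by (intro powr_mono) auto
    then have "c2 * (real j + 1) powr (-2*r) \<le> c2" using c12 by (simp add: mult_left_le)
    then show ?thesis using s0_decay[of j] by linarith
  qed
  show ?thesis
  proof (rule that[of "\<sigma> * D0"])
    show "\<sigma> * D0 \<ge> 0" using \<open>\<sigma> \<ge> 0\<close> \<open>D0 \<ge> 0\<close> by simp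
    fix nl :: "nat \<Rightarrow> nat" and lam :: real
    define N where "N = (\<Sum>l\<in>Sst. nl l)"
    define S where "S j = (\<Sum>l\<in>Sst. real (nl l) / real N * s l j)" for j
    assume "(\<Sum>l\<in>Sst. nl l) \<ge> 1"
      and lower: "\<forall>j. c * s 0 j \<le> (\<Sum>l\<in>Sst. real (nl l) / real (\<Sum>l\<in>Sst. nl l) * s l j)"
      and lam: "0 < lam" "lam \<le> 1"
    then have "N \<ge> 1" by (simp add: N_def)
    have S_lower: "c * s 0 j \<le> S j" for j using lower by (simp add: S_def N_def)
    have "real N > 0" using \<open>N \<ge> 1\<close> by simp
    then have "(\<Sum>l\<in>Sst. real (nl l) / real N) = 1"
      by (simp add: N_def sum_divide_distrib[symmetric])
    then have S_upper: "S j \<le> C * s 0 j" for j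
      unfolding S_def
      by (rule mixture_spectrum_le[where \<alpha> = "\<lambda>l. real (nl l) / real N"]) (use s_upper in simp_all)
    obtain summable: "summable (\<lambda>j. s 0 j powr (2*\<nu>) * S j / (S j + lam)\<^sup>2)"
      and sum_le: "(\<Sum>j. s 0 j powr (2*\<nu>) * S j / (S j + lam)\<^sup>2) \<le> D0 / lam powr (1 - 2*\<nu> + 1/(2*r))"
      using spectral[OF S_lower S_upper lam] by blast
    note noise_error_facts = \<open>N \<ge> 1\<close>[unfolded N_def] lam(1) \<nu>(1) s0_nonneg s0_le
      summable[unfolded S_def N_def]
    have "expectation (noise_error \<nu> nl lam)
        \<le> \<sigma> / real N * (\<Sum>j. s 0 j powr (2*\<nu>) * S j / (S j + lam)\<^sup>2)"
      using expectation_noise_error_le[OF noise_error_facts] by (simp add: \<sigma>_def S_def N_def)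
    also have "\<dots> \<le> \<sigma> / real N * (D0 / lam powr (1 - 2*\<nu> + 1/(2*r)))"
      using sum_le \<open>\<sigma> \<ge> 0\<close> by (intro mult_left_mono) auto
    finally show "integrable M (noise_error \<nu> nl lam) \<and>
      expectation (noise_error \<nu> nl lam) \<le> \<sigma> * D0 / (real (\<Sum>l\<in>Sst. nl l) * lam powr (1 - 2*\<nu> + 1/(2*r)))"
      using integrable_noise_error[OF noise_error_facts] by (simp add: N_def)
  qed
qed

lemma noise_error_tail_bound:
  assumes "e > 0"
  shows "\<exists>B N0 lam0. lam0 > 0 \<and>
           (\<forall>nl lam. ((\<Sum>l\<in>Sst. nl l) \<ge> N0 \<and>
              (\<forall>j. c * s 0 j \<le> (\<Sum>l\<in>Sst. real (nl l) / real (\<Sum>l\<in>Sst. nl l) * s l j)) \<and>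
              0 < lam \<and> lam \<le> lam0) \<longrightarrow>
            measure M {\<omega> \<in> space M.
              noise_error \<nu> nl lam \<omega> > B / (real (\<Sum>l\<in>Sst. nl l) * lam powr (1 - 2*\<nu> + 1/(2*r)))} \<le> e)"
proof (rule expectation_noise_error_bound)
  fix D assume "D \<ge> 0" and bound: "\<And>nl lam. (\<Sum>l\<in>Sst. nl l) \<ge> 1 \<Longrightarrow>
    (\<forall>j. c * s 0 j \<le> (\<Sum>l\<in>Sst. real (nl l) / real (\<Sum>l\<in>Sst. nl l) * s l j)) \<Longrightarrow>
    0 < lam \<Longrightarrow> lam \<le> 1 \<Longrightarrow>
    integrable M (noise_error \<nu> nl lam) \<and>
    expectation (noise_error \<nu> nl lam) \<le> D / (real (\<Sum>l\<in>Sst. nl l) * lam powr (1 - 2*\<nu> + 1/(2*r)))"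
  define B where "B = D / e + 1"
  have "B > 0" using \<open>D \<ge> 0\<close> \<open>e > 0\<close> by (simp add: B_def add_nonneg_pos)
  have "D / B \<le> e"
    using \<open>D \<ge> 0\<close> \<open>e > 0\<close> \<open>B > 0\<close> by (simp add: B_def divide_le_eq field_simps)
  have "measure M {\<omega> \<in> space M.
      noise_error \<nu> nl lam \<omega> > B / (real (\<Sum>l\<in>Sst. nl l) * lam powr (1 - 2*\<nu> + 1/(2*r)))} \<le> e"
    if "(\<Sum>l\<in>Sst. nl l) \<ge> 1"
      and "\<forall>j. c * s 0 j \<le> (\<Sum>l\<in>Sst. real (nl l) / real (\<Sum>l\<in>Sst. nl l) * s l j)"
      and "0 < lam" "lam \<le> 1" for nl lam
  proof -
    have "real (\<Sum>l\<in>Sst. nl l) * lam powr (1 - 2*\<nu> + 1/(2*r)) > 0"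
      using that by (simp del: of_nat_sum)
    moreover have "0 \<le> noise_error \<nu> nl lam \<omega>" for \<omega>
      by (simp add: noise_error_def Let_def)
    ultimately have "measure M {\<omega> \<in> space M.
        noise_error \<nu> nl lam \<omega> > B / (real (\<Sum>l\<in>Sst. nl l) * lam powr (1 - 2*\<nu> + 1/(2*r)))} \<le> D / B"
      using bound[OF that] \<open>B > 0\<close> by (intro measure_exceeds_le_Markov) auto
    then show ?thesis using \<open>D / B \<le> e\<close> by linarith
  qed
  then show ?thesis
    by (intro exI[of _ B] exI[of _ "1::nat"] exI[of _ "1::real"]) auto
qed

end

theorem lemma3:
  fixes M :: "'w measure"
    and Sst :: "nat set"
    and X :: "nat \<Rightarrow> nat \<Rightarrow> 'w \<Rightarrow> 'a::{real_inner, complete_space}"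
    and eps :: "nat \<Rightarrow> nat \<Rightarrow> 'w \<Rightarrow> real"
    and sigma2 :: "nat \<Rightarrow> real"
    and Khalf :: "'a \<Rightarrow> 'a"
    and Cop :: "nat \<Rightarrow> 'a \<Rightarrow> 'a"
    and \<phi> :: "nat \<Rightarrow> 'a"
    and s :: "nat \<Rightarrow> nat \<Rightarrow> real"
    and r \<nu> c C :: real
  assumes M: "prob_space M"
    and Sst: "finite Sst" "0 \<in> Sst"
    and meas: "\<forall>l\<in>Sst. \<forall>i. X l i \<in> borel_measurable M \<and> eps l i \<in> borel_measurable M"
    and indep: "prob_space.indep_vars M (\<lambda>_. borel) (\<lambda>(l, i) \<omega>. (X l i \<omega>, eps l i \<omega>)) (Sst \<times> UNIV)"
    and indep_eps: "\<forall>l\<in>Sst. \<forall>i. prob_space.indep_set M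
                   (sigma_sets (space M) {X l i -` A \<inter> space M | A. A \<in> sets borel})
                   (sigma_sets (space M) {eps l i -` A \<inter> space M | A. A \<in> sets borel})"
    and X_L2: "\<forall>l\<in>Sst. \<forall>i. integrable M (\<lambda>\<omega>. (norm (X l i \<omega>))\<^sup>2)"
    and X_mean0: "\<forall>l\<in>Sst. \<forall>i. \<forall>f. integral\<^sup>L M (\<lambda>\<omega>. X l i \<omega> \<bullet> f) = 0"
    and X_cov: "\<forall>l\<in>Sst. \<forall>i. \<forall>f g.
                  integral\<^sup>L M (\<lambda>\<omega>. (X l i \<omega> \<bullet> f) * (X l i \<omega> \<bullet> g)) = Cop l f \<bullet> g"
    and eps_L2: "\<forall>l\<in>Sst. \<forall>i. integrable M (\<lambda>\<omega>. (eps l i \<omega>)\<^sup>2)"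
    and eps_mean0: "\<forall>l\<in>Sst. \<forall>i. integral\<^sup>L M (eps l i) = 0"
    and eps_var: "\<forall>l\<in>Sst. \<forall>i. integral\<^sup>L M (\<lambda>\<omega>. (eps l i \<omega>)\<^sup>2) = sigma2 l"
    and Khalf_lin: "bounded_linear Khalf"
    and Khalf_sa: "\<forall>x y. Khalf x \<bullet> y = x \<bullet> Khalf y"
    and basis_on: "\<forall>j k. \<phi> j \<bullet> \<phi> k = (if j = k then 1 else 0)"
    and basis_complete: "closure (span (range \<phi>)) = UNIV"
    and eig: "\<forall>l\<in>Sst. \<forall>j. Khalf (Cop l (Khalf (\<phi> j))) = s l j *\<^sub>R \<phi> j"
    and r: "r > 1/2"
    and s0_decay: "\<exists>c1 c2. c1 > 0 \<and> c2 > 0 \<and>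
                    (\<forall>j. c1 * (real j + 1) powr (-2*r) \<le> s 0 j \<and> s 0 j \<le> c2 * (real j + 1) powr (-2*r))"
    and c: "c > 0" and C: "C > 0"
    and s_upper: "\<forall>l\<in>Sst. \<forall>j. s l j \<le> C * s 0 j"
    and \<nu>: "0 \<le> \<nu>" "\<nu> \<le> 1/2"
  shows "\<forall>e>0. \<exists>B N0 lam0. lam0 > 0 \<and>
           (\<forall>(nl :: nat \<Rightarrow> nat) lam.
              let N = (\<Sum>l\<in>Sst. nl l); \<alpha> = (\<lambda>l. real (nl l) / real N) in
              (N \<ge> N0 \<and> (\<forall>j. c * s 0 j \<le> (\<Sum>l\<in>Sst. \<alpha> l * s l j)) \<and> 0 < lam \<and> lam \<le> lam0) \<longrightarrow>
              measure M {\<omega> \<in> space M.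
                 (norm (op_powr_eig \<phi> (s 0) \<nu>
                    (inv (\<lambda>x. (\<Sum>l\<in>Sst. \<alpha> l *\<^sub>R Khalf (Cop l (Khalf x))) + lam *\<^sub>R x)
                      ((1 / real N) *\<^sub>R (\<Sum>l\<in>Sst. \<Sum>i<nl l. eps l i \<omega> *\<^sub>R Khalf (X l i \<omega>))))))\<^sup>2
                 > B / (real N * lam powr (1 - 2*\<nu> + 1/(2*r)))} \<le> e)"
proof -
  interpret transfer_noise_model M Sst X eps sigma2 Khalf Cop \<phi> s
    by (intro transfer_noise_model.intro transfer_noise_model_axioms.intro) (fact assms)+
  obtain c1 c2 where "c1 > 0" "c2 > 0" and "\<And>j. c1 * (real j + 1) powr (-2*r) \<le> s 0 j \<and>
      s 0 j \<le> c2 * (real j + 1) powr (-2*r)"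
    using s0_decay by blast
  then interpret transfer_noise_model_decay M Sst X eps sigma2 Khalf Cop \<phi> s r \<nu> c C c1 c2
    using r \<nu> c C s_upper by unfold_locales auto
  show ?thesis
    using noise_error_tail_bound unfolding noise_error_def Let_def by blast
qed

end
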